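(* Let $m=p_1^{m_1}\cdots p_k^{m_k}$ and let $(K_n,\alpha)$ be an edge-labeled complete graph over $\mathbb{Z}/m\mathbb{Z}$ with ordered edge labels $a_1,\dots,a_{r_n}$, each a positive divisor of $m$ representing a zero divisor of $\mathbb{Z}/m\mathbb{Z}$. (1) Suppose $a_{r_n}\mid a_{r_n-1}\mid\cdots\mid a_1\mid m$ and $m\ne a_1$. Let $H$ be a spanning subgraph of $K_n$ that is either the wheel with hub $v_1$ (i.e. $v_1$ is adjacent to all other vertices and $v_2,\dots,v_n$ form a cycle) or the star with central vertex $v_1$, with edge labels inherited from $(K_n,\alpha)$. Then the set consisting of $(1,\dots,1)$ and, for $j=2,\dots,n$, the vector with $a_{r_{j-1}+1}$ at $v_j$ and $0$ elsewhere, which is a minimum flow-up generating set of $[\mathbb{Z}/m\mathbb{Z}]_{(K_n,\alpha)}$, is also a minimum flow-up generating set of $[\mathbb{Z}/m\mathbb{Z}]_{(H,\alpha)}$. (2) Suppose $a_1\mid a_2\mid\cdots\mid a_{r_n}\mid m$ and $m\ne a_{r_n}$. Let $H$ be a spanning subgraph of $K_n$ that is either the wheel with hub $v_n$ or the star with central vertex $v_n$, with inherited edge labels. Then the set consisting of $(1,\dots,1)$ and, for $j=2,\dots,n$, the vector with entries $a_{r_n-(n-j)}$ at $v_j,\dots,v_n$ and $0$ at $v_1,\dots,v_{j-1}$, which is a minimum flow-up generating set of $[\mathbb{Z}/m\mathbb{Z}]_{(K_n,\alpha)}$, is also a minimum flow-up generating set of $[\mathbb{Z}/m\mathbb{Z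}]_{(H,\alpha)}$.
   Context: A spline on an edge-labeled graph $(G,\alpha)$ over $\mathbb{Z}/m\mathbb{Z}$ (edges labeled by nonzero ideals) is a vector $(f_{v_1},\dots,f_{v_n})\in(\mathbb{Z}/m\mathbb{Z})^n$ with $f_{v_i}-f_{v_j}\in\alpha(v_iv_j)$ for every edge; the splines form a $\mathbb{Z}$-module $[\mathbb{Z}/m\mathbb{Z}]_{(G,\alpha)}$. An $i$-th flow-up class is a spline with $f_{v_i}\ne0$ and $f_{v_t}=0$ for $t<i$. A minimum flow-up generating set is a generating set of the $\mathbb{Z}$-module of smallest possible size consisting of flow-up classes. $K_n$ is the complete graph on $v_1,\dots,v_n$; $r_k=k(k-1)/2$; for $1\le j<k\le n$ the edge $v_jv_k$ is $e_{r_{k-1}+j}$. "Ordered edge labels $a_1,\dots,a_{r_n}$" means $\alpha(e_s)$ is the ideal generated by $a_s+m\mathbb{Z}$. *)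

theory Defs
  imports "HOL-Number_Theory.Cong"
begin

text \<open>Vertices of K_n are the naturals 1..n. Elements of Z/mZ are represented by
  their canonical residues in {0..<m} (as integers). A vector in (Z/mZ)^n is a
  function nat => int that vanishes outside {1..n}. Edges are pairs (j,k) with j < k.\<close>

definition r :: "nat \<Rightarrow> nat" where
  "r k = k * (k - 1) div 2"

text \<open>The edge v_j v_k (j < k) is e_(r_(k-1)+j).\<close>
definition edge_index :: "nat \<Rightarrow> nat \<Rightarrow> nat" where
  "edge_index j k = r (k - 1) + j"

definition complete_edges :: "nat \<Rightarrow> (nat \<times> nat) set" where
  "complete_edges n = {(j, k). 1 \<le> j \<and> j < k \<and> k \<le> n}"

definition wheel_hub_first :: "nat \<Rightarrow> (nat \<times> nat) set" where
  "wheel_hub_first n = {(j, k). 1 \<le> j \<and> j < k \<and> k \<le> n \<and>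
      (j = 1 \<or> k = j + 1 \<or> (j = 2 \<and> k = n))}"

definition star_hub_first :: "nat \<Rightarrow> (nat \<times> nat) set" where
  "star_hub_first n = {(j, k). j = 1 \<and> j < k \<and> k \<le> n}"

definition wheel_hub_last :: "nat \<Rightarrow> (nat \<times> nat) set" where
  "wheel_hub_last n = {(j, k). 1 \<le> j \<and> j < k \<and> k \<le> n \<and>
      (k = n \<or> k = j + 1 \<or> (j = 1 \<and> k = n - 1))}"

definition star_hub_last :: "nat \<Rightarrow> (nat \<times> nat) set" where
  "star_hub_last n = {(j, k). 1 \<le> j \<and> j < k \<and> k = n}"

text \<open>Splines on (G, alpha) over Z/mZ, where the edge (j,k) is labelled by the ideal
  generated by a_(edge_index j k) + mZ.\<close>
definition splines :: "int \<Rightarrow> nat \<Rightarrow> (nat \<times> nat) set \<Rightarrow> (nat \<Rightarrow> int) \<Rightarrow> (nat \<Rightarrow> int) set" where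
  "splines m n E a = {f.
      (\<forall>i. i \<notin> {1..n} \<longrightarrow> f i = 0) \<and>
      (\<forall>i\<in>{1..n}. 0 \<le> f i \<and> f i < m) \<and>
      (\<forall>(j, k)\<in>E. \<exists>c. [f j - f k = c * a (edge_index j k)] (mod m))}"

definition generates :: "int \<Rightarrow> nat \<Rightarrow> (nat \<Rightarrow> int) set \<Rightarrow> (nat \<Rightarrow> int) set \<Rightarrow> bool" where
  "generates m n S B \<longleftrightarrow> B \<subseteq> S \<and>
     (\<forall>f\<in>S. \<exists>B' c. B' \<subseteq> B \<and> finite B' \<and>
        (\<forall>i\<in>{1..n}. [f i = (\<Sum>g\<in>B'. c g * g i)] (mod m)))"

definition flow_up_class :: "int \<Rightarrow> nat \<Rightarrow> (nat \<times> nat) set \<Rightarrow> (nat \<Rightarrow> int) \<Rightarrow> (nat \<Rightarrow> int) \<Rightarrow> bool" where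
  "flow_up_class m n E a f \<longleftrightarrow> f \<in> splines m n E a \<and>
     (\<exists>i\<in>{1..n}. f i \<noteq> 0 \<and> (\<forall>t\<in>{1..<i}. f t = 0))"

definition flow_up_generating_set :: "int \<Rightarrow> nat \<Rightarrow> (nat \<times> nat) set \<Rightarrow> (nat \<Rightarrow> int) \<Rightarrow> (nat \<Rightarrow> int) set \<Rightarrow> bool" where
  "flow_up_generating_set m n E a B \<longleftrightarrow>
     generates m n (splines m n E a) B \<and> (\<forall>f\<in>B. flow_up_class m n E a f)"

definition min_flow_up_generating_set :: "int \<Rightarrow> nat \<Rightarrow> (nat \<times> nat) set \<Rightarrow> (nat \<Rightarrow> int) \<Rightarrow> (nat \<Rightarrow> int) set \<Rightarrow> bool" where
  "min_flow_up_generating_set m n E a B \<longleftrightarrow>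
     flow_up_generating_set m n E a B \<and> finite B \<and>
     (\<forall>B'. flow_up_generating_set m n E a B' \<longrightarrow> card B \<le> card B')"

end

theory Submission
  imports Defs "HOL-Library.FuncSet"
begin

text \<open>In both cases the generators are triangular with respect to a tree inside the star:
  every vertex \<open>v\<^sub>j\<close> (\<open>j \<ge> 2\<close>) has a parent \<open>p j < j\<close> (\<open>v\<^sub>1\<close>, resp. \<open>v\<^sub>j\<^sub>-\<^sub>1\<close>), and
  every spline \<open>f\<close> of any graph between the star and \<open>K\<^sub>n\<close> satisfies \<open>b\<^sub>j | f\<^sub>j - f\<^sub>p\<^sub>j\<close>,
  where \<open>b\<^sub>j\<close> is the nonzero entry of the \<open>j\<close>-th generator. The coordinates \<open>f\<^sub>1\<close> and
  \<open>(f\<^sub>j - f\<^sub>p\<^sub>j) / b\<^sub>j\<close> write \<open>f\<close> as an integer combination of the generators, which are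
  flow-up classes and splines already of \<open>K\<^sub>n\<close>. For minimality, let \<open>q = m / T\<close> where the
  extreme label \<open>T\<close> is divisible by every \<open>b\<^sub>j\<close>; then \<open>q b\<^sub>j | m\<close>, so the coordinates
  are well defined modulo \<open>q \<ge> 2\<close> and map the splines onto \<open>(\<int>/q)\<^sup>n\<close>. A generating set
  of size \<open>k\<close> reaches at most \<open>q\<^sup>k\<close> values there, hence \<open>k \<ge> n\<close>.\<close>

lemma splines_finite: "finite (splines m n E a)"
proof -
  have "splines m n E a \<subseteq> (\<lambda>g i. if i \<in> {1..n} then g i else 0) ` ({1..n} \<rightarrow>\<^sub>E {0..<m})"
  proof
    fix f assume f: "f \<in> splines m n E a"
    then have "f = (\<lambda>i. if i \<in> {1..n} then restrict f {1..n} i else 0)"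
      and "restrict f {1..n} \<in> {1..n} \<rightarrow>\<^sub>E {0..<m}"
      unfolding splines_def by auto
    then show "f \<in> (\<lambda>g i. if i \<in> {1..n} then g i else 0) ` ({1..n} \<rightarrow>\<^sub>E {0..<m})" by blast
  qed
  then show ?thesis by (rule finite_subset) (simp add: finite_PiE)
qed

lemma splines_memI:
  assumes "\<And>i. i \<notin> {1..n} \<Longrightarrow> f i = 0" and "\<And>i. i \<in> {1..n} \<Longrightarrow> 0 \<le> f i \<and> f i < m"
    and "\<And>j k. (j, k) \<in> E \<Longrightarrow> a (edge_index j k) dvd f j - f k"
  shows "f \<in> splines m n E a"
proof -
  have "\<exists>c. [f j - f k = c * a (edge_index j k)] (mod m)" if "(j, k) \<in> E" for j k
    using assms(3)[OF that] by (metis dvd_def mult.commute cong_refl)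
  then show ?thesis using assms(1,2) unfolding splines_def by blast
qed

lemma splines_edge_dvd:
  assumes "f \<in> splines m n E a" and "(j, k) \<in> E" and "a (edge_index j k) dvd m"
  shows "a (edge_index j k) dvd f j - f k"
proof -
  obtain c where "[f j - f k = c * a (edge_index j k)] (mod m)"
    using assms(1,2) unfolding splines_def by blast
  then have "[f j - f k = c * a (edge_index j k)] (mod a (edge_index j k))"
    using assms(3) by (rule cong_dvd_modulus)
  then show ?thesis by (simp add: cong_dvd_iff)
qed

lemma splines_reduced_lincomb:
  assumes "0 < m" and "\<forall>x\<in>I. G x \<in> splines m n E a"
  shows "(\<lambda>i. if i \<in> {1..n} then (\<Sum>x\<in>I. c x * G x i) mod m else 0) \<in> splines m n E a"
    (is "?F \<in> _")
proof -
  have F_cong: "[?F i = (\<Sum>x\<in>I. c x * G x i)] (mod m)" for i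
  proof (cases "i \<in> {1..n}")
    case False
    then have "\<forall>x\<in>I. G x i = 0" using assms(2) unfolding splines_def by auto
    then show ?thesis using False by simp
  qed simp
  have edge: "\<exists>d. [?F j - ?F k = d * a (edge_index j k)] (mod m)" if "(j, k) \<in> E" for j k
  proof -
    have "\<forall>x\<in>I. \<exists>d. [G x j - G x k = d * a (edge_index j k)] (mod m)"
      using assms(2) that unfolding splines_def by fast
    then obtain C where C: "\<forall>x\<in>I. [G x j - G x k = C x * a (edge_index j k)] (mod m)"
      by (rule bchoice[elim_format]) blast
    have "[?F j - ?F k = (\<Sum>x\<in>I. c x * (G x j - G x k))] (mod m)"
      using cong_diff[OF F_cong F_cong] by (simp add: sum_subtractf right_diff_distrib)
    also have "[(\<Sum>x\<in>I. c x * (G x j - G x k)) = (\<Sum>x\<in>I. c x * (C x * a (edge_index j k)))] (mod m)"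
      using C by (intro cong_sum cong_mult cong_refl) auto
    also have "(\<Sum>x\<in>I. c x * (C x * a (edge_index j k))) = (\<Sum>x\<in>I. c x * C x) * a (edge_index j k)"
      by (simp add: sum_distrib_right mult.assoc)
    finally show ?thesis by blast
  qed
  show ?thesis
    unfolding splines_def mem_Collect_eq
  proof (intro conjI)
    show "\<forall>(j, k)\<in>E. \<exists>d. [?F j - ?F k = d * a (edge_index j k)] (mod m)"
      using edge by fast
  qed (use assms(1) in simp_all)
qed

lemma generates_lincomb:
  assumes "generates m n S B" and "finite B" and "f \<in> S"
  obtains c where "\<forall>i\<in>{1..n}. [f i = (\<Sum>g\<in>B. c g * g i)] (mod m)"
proof -
  obtain B' c where B': "B' \<subseteq> B" "\<forall>i\<in>{1..n}. [f i = (\<Sum>g\<in>B'. c g * g i)] (mod m)"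
    using assms(1,3) unfolding generates_def by blast
  have "(\<Sum>g\<in>B. (if g \<in> B' then c g else 0) * g i) = (\<Sum>g\<in>B \<inter> B'. c g * g i)" for i
    by (subst sum.inter_restrict[OF assms(2)]) (auto intro: sum.cong)
  then have "(\<Sum>g\<in>B. (if g \<in> B' then c g else 0) * g i) = (\<Sum>g\<in>B'. c g * g i)" for i
    using B'(1) by (simp add: Int_absorb1)
  then show ?thesis using B'(2) by (intro that[of "\<lambda>g. if g \<in> B' then c g else 0"]) simp
qed

text \<open>Counting: combinations of \<open>k\<close> generators reach at most \<open>q\<^sup>k\<close> residue vectors.\<close>
lemma generates_card_ge:
  fixes \<phi> :: "(nat \<Rightarrow> int) \<Rightarrow> nat \<Rightarrow> int"
  assumes q: "2 \<le> q" and gen: "generates m n S B" and fin: "finite B"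
    and lin: "\<And>f c j. f \<in> S \<Longrightarrow> \<forall>i\<in>{1..n}. [f i = (\<Sum>g\<in>B. c g * g i)] (mod m) \<Longrightarrow>
        j \<in> {1..n} \<Longrightarrow> [\<phi> f j = (\<Sum>g\<in>B. c g * \<phi> g j)] (mod q)"
    and onto: "\<And>v. \<exists>f\<in>S. \<forall>j\<in>{1..n}. [\<phi> f j = v j] (mod q)"
  shows "n \<le> card B"
proof -
  define \<Gamma> where "\<Gamma> d = restrict (\<lambda>j. (\<Sum>g\<in>B. d g * \<phi> g j) mod q) {1..n}" for d
  have "{1..n} \<rightarrow>\<^sub>E {0..<q} \<subseteq> \<Gamma> ` (B \<rightarrow>\<^sub>E {0..<q})"
  proof
    fix v assume v: "v \<in> {1..n} \<rightarrow>\<^sub>E {0..<q}"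
    obtain f where f: "f \<in> S" "\<forall>j\<in>{1..n}. [\<phi> f j = v j] (mod q)" using onto by blast
    obtain c where c: "\<forall>i\<in>{1..n}. [f i = (\<Sum>g\<in>B. c g * g i)] (mod m)"
      using generates_lincomb[OF gen fin f(1)] .
    define d where "d = restrict (\<lambda>g. c g mod q) B"
    have "\<Gamma> d j = v j" if j: "j \<in> {1..n}" for j
    proof -
      have "[(\<Sum>g\<in>B. d g * \<phi> g j) = (\<Sum>g\<in>B. c g * \<phi> g j)] (mod q)"
        by (intro cong_sum cong_mult cong_refl) (simp add: d_def cong_def)
      also have "[(\<Sum>g\<in>B. c g * \<phi> g j) = \<phi> f j] (mod q)"
        using lin[OF f(1) c j] by (rule cong_sym)
      also have "[\<phi> f j = v j] (mod q)" using f(2) j by blast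
      finally show ?thesis using v j by (simp add: \<Gamma>_def cong_def PiE_iff)
    qed
    then have "\<Gamma> d = v"
      using v by (intro extensionalityI[of _ "{1..n}"]) (auto simp: \<Gamma>_def PiE_iff)
    moreover have "d \<in> B \<rightarrow>\<^sub>E {0..<q}" using q by (simp add: d_def)
    ultimately show "v \<in> \<Gamma> ` (B \<rightarrow>\<^sub>E {0..<q})" by blast
  qed
  then have "card ({1..n} \<rightarrow>\<^sub>E {0..<q}) \<le> card (\<Gamma> ` (B \<rightarrow>\<^sub>E {0..<q}))"
    by (intro card_mono) (simp_all add: fin finite_PiE)
  also have "\<dots> \<le> card (B \<rightarrow>\<^sub>E {0..<q})"
    by (rule card_image_le) (simp add: fin finite_PiE)
  finally have "nat q ^ n \<le> nat q ^ card B" by (simp add: card_PiE fin)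
  then show ?thesis using q by (simp add: power_le_imp_le_exp)
qed

locale triangular_splines =
  fixes m :: int and n :: nat and E :: "(nat \<times> nat) set" and a :: "nat \<Rightarrow> int"
    and b :: "nat \<Rightarrow> int" and p :: "nat \<Rightarrow> nat" and q :: int
  assumes m_pos: "0 < m"
    and q_ge_2: "2 \<le> q" and q_dvd_m: "q dvd m"
    and b_pos: "j \<in> {2..n} \<Longrightarrow> 0 < b j"
    and q_b_dvd_m: "j \<in> {2..n} \<Longrightarrow> q * b j dvd m"
    and parent: "j \<in> {2..n} \<Longrightarrow> p j \<in> {1..<j}"
    and splines_dvd_parent: "f \<in> splines m n E a \<Longrightarrow> j \<in> {2..n} \<Longrightarrow> b j dvd f j - f (p j)"
begin

definition parent_dvd :: "(nat \<Rightarrow> int) \<Rightarrow> bool" where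
  "parent_dvd f \<longleftrightarrow> (\<forall>j\<in>{2..n}. b j dvd f j - f (p j))"

definition coord :: "(nat \<Rightarrow> int) \<Rightarrow> nat \<Rightarrow> int" where
  "coord f j = (if j = 1 then f 1 else (f j - f (p j)) div b j)"

lemma splines_parent_dvd: "f \<in> splines m n E a \<Longrightarrow> parent_dvd f"
  unfolding parent_dvd_def using splines_dvd_parent by blast

lemma parent_dvd_lincomb:
  assumes "\<forall>x\<in>I. parent_dvd (G x)"
  shows "parent_dvd (\<lambda>i. \<Sum>x\<in>I. c x * G x i)"
  unfolding parent_dvd_def
proof
  fix j assume j: "j \<in> {2..n}"
  have "(\<Sum>x\<in>I. c x * G x j) - (\<Sum>x\<in>I. c x * G x (p j)) = (\<Sum>x\<in>I. c x * (G x j - G x (p j)))"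
    by (simp add: sum_subtractf right_diff_distrib)
  also have "b j dvd \<dots>"
    using assms j unfolding parent_dvd_def by (intro dvd_sum dvd_mult) auto
  finally show "b j dvd (\<Sum>x\<in>I. c x * G x j) - (\<Sum>x\<in>I. c x * G x (p j))" .
qed

lemma eq_parent_add_coord:
  assumes "parent_dvd f" and "j \<in> {2..n}"
  shows "f j = f (p j) + b j * coord f j"
  using assms unfolding parent_dvd_def coord_def by auto

lemma coord_lincomb:
  assumes "\<forall>x\<in>I. parent_dvd (G x)" and "j \<in> {1..n}"
  shows "coord (\<lambda>i. \<Sum>x\<in>I. c x * G x i) j = (\<Sum>x\<in>I. c x * coord (G x) j)"
proof (cases "j = 1")
  case False
  then have j: "j \<in> {2..n}" using assms(2) by auto
  have "(\<Sum>x\<in>I. c x * G x j) - (\<Sum>x\<in>I. c x * G x (p j)) = (\<Sum>x\<in>I. c x * (G x j - G x (p j)))"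
    by (simp add: sum_subtractf right_diff_distrib)
  also have "\<dots> = (\<Sum>x\<in>I. b j * (c x * coord (G x) j))"
  proof (rule sum.cong)
    fix x assume "x \<in> I"
    then have "G x j - G x (p j) = b j * coord (G x) j"
      using eq_parent_add_coord[OF _ j] assms(1) by (metis add_diff_cancel_left')
    then show "c x * (G x j - G x (p j)) = b j * (c x * coord (G x) j)" by simp
  qed simp
  also have "\<dots> = b j * (\<Sum>x\<in>I. c x * coord (G x) j)"
    by (simp add: sum_distrib_left)
  finally show ?thesis using False b_pos[OF j] by (simp add: coord_def)
qed (simp add: coord_def)

lemma coord_cong:
  assumes "parent_dvd f" and "parent_dvd g" and "\<forall>i\<in>{1..n}. [f i = g i] (mod m)" and "j \<in> {1..n}"
  shows "[coord f j = coord g j] (mod q)"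
proof (cases "j = 1")
  case True
  have "[f 1 = g 1] (mod m)" using assms(3,4) True by auto
  then show ?thesis using True q_dvd_m by (simp add: coord_def cong_dvd_modulus)
next
  case False
  then have j: "j \<in> {2..n}" using assms(4) by auto
  have "[f j - f (p j) = g j - g (p j)] (mod m)"
    using assms(3,4) parent[OF j] by (intro cong_diff) auto
  then have "m dvd b j * (coord f j - coord g j)"
    using eq_parent_add_coord[OF assms(1) j] eq_parent_add_coord[OF assms(2) j]
    by (simp add: cong_iff_dvd_diff algebra_simps)
  then have "q * b j dvd b j * (coord f j - coord g j)"
    using dvd_trans[OF q_b_dvd_m[OF j]] by blast
  then have "q dvd coord f j - coord g j"
    using b_pos[OF j] by (simp add: mult.commute)
  then show ?thesis by (simp add: cong_iff_dvd_diff)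
qed

lemma coord_eq_imp_eq:
  assumes "parent_dvd f" and "parent_dvd g" and "t \<le> n"
    and "\<forall>j\<in>{1..t}. coord f j = coord g j" and "i \<in> {1..t}"
  shows "f i = g i"
  using assms(5)
proof (induction i rule: less_induct)
  case (less i)
  show ?case
  proof (cases "i = 1")
    case True
    then show ?thesis using assms(4)[rule_format, of 1] less.prems by (auto simp: coord_def)
  next
    case False
    then have i: "i \<in> {2..n}" using less.prems assms(3) by auto
    then have "f (p i) = g (p i)" using parent[OF i] less by auto
    then show ?thesis
      using eq_parent_add_coord[OF assms(1) i] eq_parent_add_coord[OF assms(2) i] assms(4) less.prems
      by simp
  qed
qed

context
  fixes gen :: "nat \<Rightarrow> nat \<Rightarrow> int"
  assumes gen_splines: "k \<in> {1..n} \<Longrightarrow> gen k \<in> splines m n E a"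
    and coord_gen: "k \<in> {1..n} \<Longrightarrow> j \<in> {1..n} \<Longrightarrow> coord (gen k) j = (if j = k then 1 else 0)"
begin

lemma gen_parent_dvd: "\<forall>k\<in>{1..n}. parent_dvd (gen k)"
  using gen_splines splines_parent_dvd by blast

lemma coord_gen_lincomb:
  assumes "j \<in> {1..n}"
  shows "coord (\<lambda>i. \<Sum>k\<in>{1..n}. c k * gen k i) j = c j"
proof -
  have "coord (\<lambda>i. \<Sum>k\<in>{1..n}. c k * gen k i) j = (\<Sum>k\<in>{1..n}. c k * coord (gen k) j)"
    using coord_lincomb[OF gen_parent_dvd assms] .
  also have "\<dots> = (\<Sum>k\<in>{1..n}. if k = j then c k else 0)"
    using assms coord_gen by (intro sum.cong) auto
  finally show ?thesis using assms by simp
qed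

lemma splines_eq_lincomb_gen:
  assumes "f \<in> splines m n E a" and "i \<in> {1..n}"
  shows "f i = (\<Sum>k\<in>{1..n}. coord f k * gen k i)"
  using coord_eq_imp_eq[OF splines_parent_dvd[OF assms(1)] parent_dvd_lincomb[OF gen_parent_dvd]]
    coord_gen_lincomb assms(2) by auto

lemma gen_flow_up: "k \<in> {1..n} \<Longrightarrow> flow_up_class m n E a (gen k)"
proof -
  assume k: "k \<in> {1..n}"
  have below: "gen k t = 0" if "t \<in> {1..<k}" for t
  proof -
    have "coord (\<lambda>_. 0) j = 0" for j by (simp add: coord_def)
    then have "\<forall>j\<in>{1..k - 1}. coord (gen k) j = coord (\<lambda>_. 0) j"
      using k coord_gen by auto
    then show ?thesis
      using coord_eq_imp_eq[of "gen k" "\<lambda>_. 0" "k - 1" t] gen_parent_dvd k that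
      by (auto simp: parent_dvd_def)
  qed
  have "gen k k \<noteq> 0"
  proof (cases "k = 1")
    case True
    then show ?thesis using coord_gen[OF k k] by (simp add: coord_def)
  next
    case False
    then have k2: "k \<in> {2..n}" using k by auto
    have "gen k k = b k"
      using eq_parent_add_coord[of "gen k" k] gen_parent_dvd k2 below[of "p k"] parent[OF k2]
        coord_gen[OF k k]
      by auto
    then show ?thesis using b_pos[OF k2] by simp
  qed
  then show ?thesis
    unfolding flow_up_class_def using gen_splines[OF k] below k by (intro conjI bexI[of _ k]) auto
qed

lemma inj_on_gen: "inj_on gen {1..n}"
proof (rule inj_onI)
  fix k l assume k: "k \<in> {1..n}" and l: "l \<in> {1..n}" and "gen k = gen l"
  then have "coord (gen l) k = 1" using coord_gen[OF k k] by simp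
  then show "k = l" using coord_gen[OF l k] by (simp split: if_splits)
qed

lemma generates_gen: "generates m n (splines m n E a) (gen ` {1..n})"
  unfolding generates_def
proof (intro conjI ballI)
  fix f assume f: "f \<in> splines m n E a"
  define c where "c g = coord f (the_inv_into {1..n} gen g)" for g
  have "(\<Sum>g\<in>gen ` {1..n}. c g * g i) = (\<Sum>k\<in>{1..n}. c (gen k) * gen k i)" for i
    by (subst sum.reindex[OF inj_on_gen]) simp
  also have "\<dots> i = (\<Sum>k\<in>{1..n}. coord f k * gen k i)" for i
  proof (rule sum.cong)
    fix k assume "k \<in> {1..n}"
    then show "c (gen k) * gen k i = coord f k * gen k i"
      unfolding c_def by (subst the_inv_into_f_f[OF inj_on_gen]) simp_all
  qed simp
  finally have "f i = (\<Sum>g\<in>gen ` {1..n}. c g * g i)" if "i \<in> {1..n}" for i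
    using splines_eq_lincomb_gen[OF f that] by simp
  then show "\<exists>B' c. B' \<subseteq> gen ` {1..n} \<and> finite B' \<and> (\<forall>i\<in>{1..n}. [f i = (\<Sum>g\<in>B'. c g * g i)] (mod m))"
    by (intro exI[of _ "gen ` {1..n}"] exI[of _ c]) auto
qed (use gen_splines in blast)

lemma generates_card_ge_n:
  assumes "generates m n (splines m n E a) B" and "finite B"
  shows "n \<le> card B"
proof (rule generates_card_ge[OF q_ge_2 assms, where \<phi> = coord])
  have B: "B \<subseteq> splines m n E a" using assms(1) unfolding generates_def by blast
  show "[coord f j = (\<Sum>g\<in>B. c g * coord g j)] (mod q)"
    if "f \<in> splines m n E a" and "\<forall>i\<in>{1..n}. [f i = (\<Sum>g\<in>B. c g * g i)] (mod m)" and "j \<in> {1..n}"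
    for f c j
  proof -
    have "\<forall>g\<in>B. parent_dvd g" using B splines_parent_dvd by blast
    then show ?thesis
      using coord_cong[OF splines_parent_dvd[OF that(1)] parent_dvd_lincomb[of B "\<lambda>g. g" c] that(2,3)]
        coord_lincomb[of B "\<lambda>g. g" j c] that(3) by simp
  qed
  show "\<exists>f\<in>splines m n E a. \<forall>j\<in>{1..n}. [coord f j = v j] (mod q)" for v
  proof -
    define f where "f i = (if i \<in> {1..n} then (\<Sum>k\<in>{1..n}. v k * gen k i) mod m else 0)" for i
    have f: "f \<in> splines m n E a"
      unfolding f_def using m_pos gen_splines by (intro splines_reduced_lincomb) auto
    have "[coord f j = v j] (mod q)" if "j \<in> {1..n}" for j
      using coord_cong[OF splines_parent_dvd[OF f] parent_dvd_lincomb[OF gen_parent_dvd] _ that]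
        coord_gen_lincomb[OF that] by (simp add: f_def)
    then show ?thesis using f by blast
  qed
qed

theorem min_flow_up_generating_set_gen:
  "min_flow_up_generating_set m n E a (gen ` {1..n})"
proof -
  have "flow_up_generating_set m n E a (gen ` {1..n})"
    unfolding flow_up_generating_set_def using generates_gen gen_flow_up by blast
  moreover have "card (gen ` {1..n}) \<le> card B" if "flow_up_generating_set m n E a B" for B
  proof -
    have B: "generates m n (splines m n E a) B"
      using that unfolding flow_up_generating_set_def by blast
    then have "finite B"
      using finite_subset[OF _ splines_finite] unfolding generates_def by blast
    then show ?thesis using generates_card_ge_n[OF B] card_image[OF inj_on_gen] by simp
  qed
  ultimately show ?thesis unfolding min_flow_up_generating_set_def by blast
qed

end

end

lemma r_Suc: "r (Suc k) = r k + k"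
proof -
  have "Suc k * k = k * (k - 1) + 2 * k" by (cases k) (auto simp: algebra_simps)
  then show ?thesis unfolding r_def by simp
qed

lemma r_mono: "i \<le> j \<Longrightarrow> r i \<le> r j"
  by (induction j rule: dec_induct) (auto simp: r_Suc)

lemma r_ge_1: "2 \<le> n \<Longrightarrow> 1 \<le> r n"
  using r_mono[of 2 n] by (simp add: r_def)

lemma edge_index_le_r:
  assumes "j < k" and "k \<le> n"
  shows "edge_index j k \<le> r n"
proof -
  have "r (k - 1) + j \<le> r k" using r_Suc[of "k - 1"] assms(1) by simp
  also have "r k \<le> r n" using assms(2) by (rule r_mono)
  finally show ?thesis by (simp add: edge_index_def)
qed

lemma edge_index_less:
  assumes "j < k" and "k < k'" and "1 \<le> j'"
  shows "edge_index j k < edge_index j' k'"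
proof -
  have "r (k - 1) + j \<le> r k" using r_Suc[of "k - 1"] assms(1) by simp
  also have "r k \<le> r (k' - 1)" using assms(2) by (intro r_mono) simp
  finally show ?thesis using assms(3) by (simp add: edge_index_def)
qed

lemma complete_edge_index:
  assumes "(j, k) \<in> complete_edges n"
  shows "edge_index j k \<in> {1..r n}"
  using assms edge_index_le_r[of j k n] by (auto simp: complete_edges_def edge_index_def)

lemma chain_rel_le:
  fixes f :: "nat \<Rightarrow> 'a" and i j :: nat
  assumes "\<And>x. R x x" and "\<And>x y z. R x y \<Longrightarrow> R y z \<Longrightarrow> R x z"
    and "\<forall>s\<in>{i..<j}. R (f s) (f (s + 1))" and "i \<le> j"
  shows "R (f i) (f j)"
  using assms(4,3)
proof (induction j rule: dec_induct)
  case (step k)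
  then show ?case using assms(2) by auto
qed (use assms(1) in auto)

lemma dvd_chain_mono:
  fixes a :: "nat \<Rightarrow> 'a::comm_monoid_mult"
  assumes "\<forall>s\<in>{1..<N}. a s dvd a (s + 1)" and "1 \<le> s" and "s \<le> t" and "t \<le> N"
  shows "a s dvd a t"
  by (rule chain_rel_le[where R = "(dvd)"]) (use assms in \<open>auto intro: dvd_trans\<close>)

lemma dvd_chain_antimono:
  fixes a :: "nat \<Rightarrow> 'a::comm_monoid_mult"
  assumes "\<forall>s\<in>{1..<N}. a (s + 1) dvd a s" and "1 \<le> s" and "s \<le> t" and "t \<le> N"
  shows "a t dvd a s"
  by (rule chain_rel_le[where R = "\<lambda>x y. y dvd x"]) (use assms in \<open>auto intro: dvd_trans\<close>)

lemma two_le_div: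
  fixes c m :: int
  assumes "1 < c" and "c < m" and "c dvd m"
  shows "2 \<le> m div c"
proof -
  obtain d where d: "m = c * d" using assms(3) by blast
  have "1 < d"
  proof (rule ccontr)
    assume "\<not> 1 < d"
    then have "c * d \<le> c" using assms(1) by (simp add: mult_le_cancel_left1)
    then show False using d assms(2) by simp
  qed
  then show ?thesis using d assms(1) by simp
qed

lemma triangular_splinesI:
  assumes "1 < T" and "T < m" and "T dvd m"
    and "\<And>j. j \<in> {2..n} \<Longrightarrow> 0 < b j \<and> b j dvd T \<and> p j \<in> {1..<j}"
    and "\<And>f j. f \<in> splines m n E a \<Longrightarrow> j \<in> {2..n} \<Longrightarrow> b j dvd f j - f (p j)"
  shows "triangular_splines m n E a b p (m div T)"
proof
  show "m div T * b j dvd m" if "j \<in> {2..n}" for j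
  proof -
    have "m div T * b j dvd m div T * T" using assms(4)[OF that] by simp
    then show ?thesis using assms(3) by simp
  qed
qed (use assms two_le_div[OF assms(1-3)] in \<open>auto intro: dvd_trans\<close>)

lemma image_if_first:
  fixes n :: nat
  assumes "1 \<le> n"
  shows "(\<lambda>k. if k = 1 then x else h k) ` {1..n} = insert x (h ` {2..n})"
proof -
  have "{1..n} = insert 1 {2..n}" using assms by auto
  then show ?thesis by (auto intro!: image_cong)
qed

lemma complete_edge_label:
  assumes "\<forall>s\<in>{1..r n}. a s dvd m \<and> 1 < a s \<and> a s < m" and "(j, k) \<in> complete_edges n"
  shows "a (edge_index j k) dvd m \<and> 1 < a (edge_index j k) \<and> a (edge_index j k) < m"
  using assms complete_edge_index by blast

lemma constant_in_splines:
  assumes "1 < m" and "E \<subseteq> complete_edges n"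
  shows "(\<lambda>i. if i \<in> {1..n} then 1 else 0) \<in> splines m n E a"
  using assms by (intro splines_memI) (auto simp: complete_edges_def)

lemma indicator_in_splines_hub_first:
  fixes a :: "nat \<Rightarrow> int"
  assumes labels: "\<forall>s\<in>{1..r n}. a s dvd m \<and> 1 < a s \<and> a s < m"
    and chain: "\<forall>s\<in>{1..<r n}. a (s + 1) dvd a s"
    and complete: "E \<subseteq> complete_edges n" and k: "k \<in> {2..n}"
  shows "(\<lambda>i. if i = k then a (edge_index 1 k) else 0) \<in> splines m n E a"
proof (rule splines_memI)
  have k_edge: "(1, k) \<in> complete_edges n" using k by (auto simp: complete_edges_def)
  show "0 \<le> (if i = k then a (edge_index 1 k) else 0) \<and> (if i = k then a (edge_index 1 k) else 0) < m"
    for i using complete_edge_label[OF labels k_edge] by auto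
  show "a (edge_index j l) dvd (if j = k then a (edge_index 1 k) else 0)
      - (if l = k then a (edge_index 1 k) else 0)" if jl_E: "(j, l) \<in> E" for j l
  proof -
    have jl: "1 \<le> j" "j < l" "l \<le> n" using jl_E complete by (auto simp: complete_edges_def)
    have "a (edge_index j l) dvd a (edge_index 1 k)" if "k = j \<or> k = l"
    proof (rule dvd_chain_antimono[OF chain])
      show "edge_index 1 k \<le> edge_index j l"
        using that k jl edge_index_less[of 1 k l j] by (auto simp: edge_index_def)
    qed (use complete_edge_index k_edge jl_E complete in auto)
    then show ?thesis using jl by auto
  qed
qed (use k in auto)

lemma splines_dvd_hub_first:
  assumes labels: "\<forall>s\<in>{1..r n}. a s dvd m \<and> 1 < a s \<and> a s < m"
    and star: "star_hub_first n \<subseteq> E" and f: "f \<in> splines m n E a" and j: "j \<in> {2..n}"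
  shows "a (edge_index 1 j) dvd f j - f 1"
proof -
  have "(1, j) \<in> E" using star j by (auto simp: star_hub_first_def)
  moreover have "(1, j) \<in> complete_edges n" using j by (auto simp: complete_edges_def)
  ultimately show ?thesis
    using splines_edge_dvd[OF f] complete_edge_label[OF labels] by (metis dvd_diff_commute)
qed

lemma min_flow_up_generating_set_hub_first:
  fixes a :: "nat \<Rightarrow> int"
  assumes n: "2 \<le> n"
    and labels: "\<forall>s\<in>{1..r n}. a s dvd m \<and> 1 < a s \<and> a s < m"
    and chain: "\<forall>s\<in>{1..<r n}. a (s + 1) dvd a s"
    and star: "star_hub_first n \<subseteq> E" and complete: "E \<subseteq> complete_edges n"
  shows "min_flow_up_generating_set m n E a
    (insert (\<lambda>i. if i \<in> {1..n} then 1 else 0)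
      ((\<lambda>j i. if i = j then a (r (j - 1) + 1) else 0) ` {2..n}))"
proof -
  define b where "b j = a (edge_index 1 j)" for j
  define gen where "gen k = (if k = 1 then (\<lambda>i. if i \<in> {1..n} then 1 else 0)
    else (\<lambda>i. if i = k then b k else 0))" for k
  have top: "1 < a 1" "a 1 < m" "a 1 dvd m" using labels r_ge_1[OF n] by auto
  have b: "0 < b j \<and> b j dvd a 1" if "j \<in> {2..n}" for j
  proof -
    have idx: "edge_index 1 j \<in> {1..r n}"
      using that by (intro complete_edge_index) (auto simp: complete_edges_def)
    have "a (edge_index 1 j) dvd a 1" using dvd_chain_antimono[OF chain] idx by simp
    moreover have "1 < a (edge_index 1 j)" using labels idx by blast
    ultimately show ?thesis unfolding b_def by simp
  qed
  interpret triangular_splines m n E a b "\<lambda>_. 1" "m div a 1"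
  proof (rule triangular_splinesI[OF top])
    show "0 < b j \<and> b j dvd a 1 \<and> 1 \<in> {1..<j}" if "j \<in> {2..n}" for j
      using b[OF that] that by auto
    show "b j dvd f j - f 1" if "f \<in> splines m n E a" "j \<in> {2..n}" for f j
      unfolding b_def using splines_dvd_hub_first[OF labels star that] .
  qed
  have "gen k \<in> splines m n E a" if "k \<in> {1..n}" for k
  proof (cases "k = 1")
    case True
    then show ?thesis using constant_in_splines[OF _ complete] top unfolding gen_def by simp
  next
    case False
    then show ?thesis
      using indicator_in_splines_hub_first[OF labels chain complete, of k] that
      unfolding gen_def b_def by simp
  qed
  moreover have "coord (gen k) j = (if j = k then 1 else 0)" if "k \<in> {1..n}" "j \<in> {1..n}" for k j
    using that b[of j] unfolding coord_def gen_def by auto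
  ultimately have "min_flow_up_generating_set m n E a (gen ` {1..n})"
    by (rule min_flow_up_generating_set_gen)
  moreover have "gen ` {1..n} = insert (\<lambda>i. if i \<in> {1..n} then 1 else 0)
      ((\<lambda>j i. if i = j then a (r (j - 1) + 1) else 0) ` {2..n})"
    unfolding gen_def b_def edge_index_def using n by (intro image_if_first) simp
  ultimately show ?thesis by simp
qed

lemma tail_in_splines_hub_last:
  fixes a :: "nat \<Rightarrow> int"
  assumes labels: "\<forall>s\<in>{1..r n}. a s dvd m \<and> 1 < a s \<and> a s < m"
    and chain: "\<forall>s\<in>{1..<r n}. a s dvd a (s + 1)"
    and complete: "E \<subseteq> complete_edges n" and k: "k \<in> {2..n}"
  shows "(\<lambda>i. if i \<in> {k..n} then a (edge_index (k - 1) n) else 0) \<in> splines m n E a"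
proof (rule splines_memI)
  have k_edge: "(k - 1, n) \<in> complete_edges n" using k by (auto simp: complete_edges_def)
  show "0 \<le> (if i \<in> {k..n} then a (edge_index (k - 1) n) else 0)
      \<and> (if i \<in> {k..n} then a (edge_index (k - 1) n) else 0) < m" for i
    using complete_edge_label[OF labels k_edge] by auto
  show "a (edge_index j l) dvd (if j \<in> {k..n} then a (edge_index (k - 1) n) else 0)
      - (if l \<in> {k..n} then a (edge_index (k - 1) n) else 0)" if jl_E: "(j, l) \<in> E" for j l
  proof -
    have jl: "1 \<le> j" "j < l" "l \<le> n" using jl_E complete by (auto simp: complete_edges_def)
    have "a (edge_index j l) dvd a (edge_index (k - 1) n)" if "j < k" "k \<le> l"
    proof (rule dvd_chain_mono[OF chain])
      show "edge_index j l \<le> edge_index (k - 1) n"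
      proof (cases "l = n")
        case True
        then show ?thesis using that jl by (simp add: edge_index_def)
      next
        case False
        then show ?thesis using that jl by (intro less_imp_le[OF edge_index_less]) auto
      qed
    qed (use complete_edge_index k_edge jl_E complete in auto)
    then show ?thesis using jl by auto
  qed
qed (use k in auto)

lemma splines_dvd_hub_last:
  fixes a :: "nat \<Rightarrow> int"
  assumes labels: "\<forall>s\<in>{1..r n}. a s dvd m \<and> 1 < a s \<and> a s < m"
    and chain: "\<forall>s\<in>{1..<r n}. a s dvd a (s + 1)"
    and star: "star_hub_last n \<subseteq> E" and f: "f \<in> splines m n E a" and j: "j \<in> {2..n}"
  shows "a (edge_index (j - 1) n) dvd f j - f (j - 1)"
proof -
  have star_edge: "a (edge_index i n) dvd f i - f n" if "1 \<le> i" "i < n" for i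
  proof -
    have "(i, n) \<in> E" using star that by (auto simp: star_hub_last_def)
    moreover have "(i, n) \<in> complete_edges n" using that by (auto simp: complete_edges_def)
    ultimately show ?thesis using splines_edge_dvd[OF f] complete_edge_label[OF labels] by blast
  qed
  have parent_edge: "a (edge_index (j - 1) n) dvd f (j - 1) - f n" by (rule star_edge) (use j in auto)
  show ?thesis
  proof (cases "j = n")
    case True
    then show ?thesis using parent_edge by (simp add: dvd_diff_commute)
  next
    case False
    then have "j < n" using j by simp
    (* v\<^sub>j v\<^sub>n is the edge right after v\<^sub>j\<^sub>-\<^sub>1 v\<^sub>n in the ordering *)
    have "a (edge_index (j - 1) n) dvd a (edge_index j n)"
    proof -
      have "edge_index j n \<in> {1..r n}"
        using \<open>j < n\<close> j by (intro complete_edge_index) (auto simp: complete_edges_def)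
      moreover have succ: "edge_index j n = edge_index (j - 1) n + 1"
        using j by (simp add: edge_index_def)
      ultimately have "edge_index (j - 1) n \<in> {1..<r n}" using j by (auto simp: edge_index_def)
      then show ?thesis unfolding succ using chain by blast
    qed
    also have "a (edge_index j n) dvd f j - f n" by (rule star_edge) (use \<open>j < n\<close> j in auto)
    finally have "a (edge_index (j - 1) n) dvd (f j - f n) - (f (j - 1) - f n)"
      using parent_edge by (rule dvd_diff)
    then show ?thesis by simp
  qed
qed

lemma min_flow_up_generating_set_hub_last:
  fixes a :: "nat \<Rightarrow> int"
  assumes n: "2 \<le> n"
    and labels: "\<forall>s\<in>{1..r n}. a s dvd m \<and> 1 < a s \<and> a s < m"
    and chain: "\<forall>s\<in>{1..<r n}. a s dvd a (s + 1)"
    and star: "star_hub_last n \<subseteq> E" and complete: "E \<subseteq> complete_edges n"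
  shows "min_flow_up_generating_set m n E a
    (insert (\<lambda>i. if i \<in> {1..n} then 1 else 0)
      ((\<lambda>j i. if i \<in> {j..n} then a (r n - (n - j)) else 0) ` {2..n}))"
proof -
  define b where "b j = a (r n - (n - j))" for j
  define gen where "gen k = (if k = 1 then (\<lambda>i. if i \<in> {1..n} then 1 else 0)
    else (\<lambda>i. if i \<in> {k..n} then b k else 0))" for k
  have top: "1 < a (r n)" "a (r n) < m" "a (r n) dvd m" using labels r_ge_1[OF n] by auto
  have b_edge: "b j = a (edge_index (j - 1) n)" if "j \<in> {2..n}" for j
    using that r_Suc[of "n - 1"] n by (simp add: b_def edge_index_def)
  have b: "0 < b j \<and> b j dvd a (r n)" if "j \<in> {2..n}" for j
  proof -
    have idx: "edge_index (j - 1) n \<in> {1..r n}"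
      using that by (intro complete_edge_index) (auto simp: complete_edges_def)
    have "a (edge_index (j - 1) n) dvd a (r n)" using dvd_chain_mono[OF chain] idx by simp
    moreover have "1 < a (edge_index (j - 1) n)" using labels idx by blast
    ultimately show ?thesis using b_edge[OF that] by simp
  qed
  interpret triangular_splines m n E a b "\<lambda>j. j - 1" "m div a (r n)"
  proof (rule triangular_splinesI[OF top])
    show "0 < b j \<and> b j dvd a (r n) \<and> j - 1 \<in> {1..<j}" if "j \<in> {2..n}" for j
      using b[OF that] that by auto
    show "b j dvd f j - f (j - 1)" if "f \<in> splines m n E a" "j \<in> {2..n}" for f j
      unfolding b_edge[OF that(2)] using splines_dvd_hub_last[OF labels chain star that] .
  qed
  have "gen k \<in> splines m n E a" if "k \<in> {1..n}" for k
  proof (cases "k = 1")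
    case True
    then show ?thesis using constant_in_splines[OF _ complete] top unfolding gen_def by simp
  next
    case False
    then have "k \<in> {2..n}" using that by simp
    then show ?thesis
      using tail_in_splines_hub_last[OF labels chain complete] False
      unfolding gen_def b_edge[OF \<open>k \<in> {2..n}\<close>] by simp
  qed
  moreover have "coord (gen k) j = (if j = k then 1 else 0)" if "k \<in> {1..n}" "j \<in> {1..n}" for k j
    using that b[of j] unfolding coord_def gen_def by auto
  ultimately have "min_flow_up_generating_set m n E a (gen ` {1..n})"
    by (rule min_flow_up_generating_set_gen)
  moreover have "gen ` {1..n} = insert (\<lambda>i. if i \<in> {1..n} then 1 else 0)
      ((\<lambda>j i. if i \<in> {j..n} then a (r n - (n - j)) else 0) ` {2..n})"
    unfolding gen_def b_def using n by (intro image_if_first) simp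
  ultimately show ?thesis by simp
qed

theorem mainTheorem7:
  fixes m :: int and n :: nat and a :: "nat \<Rightarrow> int"
  assumes n2: "n \<ge> 2"
    and labels: "\<forall>s\<in>{1..r n}. a s dvd m \<and> 1 < a s \<and> a s < m"
  shows
   "((\<forall>s\<in>{1..<r n}. a (s + 1) dvd a s) \<and> a 1 dvd m \<and> m \<noteq> a 1 \<longrightarrow>
      (let B = insert (\<lambda>i. if i \<in> {1..n} then 1 else 0)
                 ((\<lambda>j. \<lambda>i. if i = j then a (r (j - 1) + 1) else 0) ` {2..n})
       in min_flow_up_generating_set m n (complete_edges n) a B \<and>
          (\<forall>H\<in>{wheel_hub_first n, star_hub_first n}.
              min_flow_up_generating_set m n H a B)))
    \<and>
    ((\<forall>s\<in>{1..<r n}. a s dvd a (s + 1)) \<and> a (r n) dvd m \<and> m \<noteq> a (r n) \<longrightarrow>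
      (let B = insert (\<lambda>i. if i \<in> {1..n} then 1 else 0)
                 ((\<lambda>j. \<lambda>i. if i \<in> {j..n} then a (r n - (n - j)) else 0) ` {2..n})
       in min_flow_up_generating_set m n (complete_edges n) a B \<and>
          (\<forall>H\<in>{wheel_hub_last n, star_hub_last n}.
              min_flow_up_generating_set m n H a B)))"
proof -
  have subgraphs: "star_hub_first n \<subseteq> wheel_hub_first n" "wheel_hub_first n \<subseteq> complete_edges n"
    "star_hub_last n \<subseteq> wheel_hub_last n" "wheel_hub_last n \<subseteq> complete_edges n"
    by (auto simp: star_hub_first_def wheel_hub_first_def star_hub_last_def wheel_hub_last_def
        complete_edges_def)
  show ?thesis
    unfolding Let_def ball_simps(5,7)
    by (intro conjI impI TrueI; elim conjE;
        (rule min_flow_up_generating_set_hub_first[OF n2 labels]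
          | rule min_flow_up_generating_set_hub_last[OF n2 labels]); use subgraphs in blast)
qed

end
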